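(* The solution to the optimization problem \[ \underset{(\mu,\rho)}{\text{minimize}} \ \frac{1}{n}\sum_{i=1}^{n}\frac{1}{V_{i}}\sum_{v=1}^{V_{i}}\mathbb{E}\left\{\boldsymbol{\gamma}^\top\Sigma_{iv}^{*}\boldsymbol{\gamma}-\exp(\beta_{0i}+\mathbf{x}_{iv}^\top\boldsymbol{\beta}_{1})\right\}^{2}\quad\text{such that } \Sigma_{iv}^{*}=\rho\mu\mathbf{I}+(1-\rho)\mathbf{S}_{iv} \] is \[ \Sigma_{iv}^{*}=\frac{\psi^{2}}{\delta^{2}}\mu\mathbf{I}+\frac{\phi^{2}}{\delta^{2}}\mathbf{S}_{iv},\quad v=1,\dots,V_{i},\ i=1,\dots,n, \] and the minimum value of the objective is $\psi^{2}\phi^{2}/\delta^{2}$, where \[ \mu=\frac{1}{n(\boldsymbol{\gamma}^\top\boldsymbol{\gamma})}\sum_{i=1}^{n}\frac{1}{V_{i}}\sum_{v=1}^{V_{i}}\exp(\mathbf{w}_{iv}^\top\boldsymbol{\beta}_{i}), \] \[ \phi^{2}=\frac{1}{n}\sum_{i=1}^{n}\frac{1}{V_{i}}\sum_{v=1}^{V_{i}}\phi_{iv}^{2},\quad \psi^{2}=\frac{1}{n}\sum_{i=1}^{n}\frac{1}{V_{i}}\sum_{v=1}^{V_{i}}\psi_{iv}^{2},\quad \delta^{2}=\frac{1}{n}\sum_{i=1}^{n}\frac{1}{V_{i}}\sum_{v=1}^{V_{i}}\delta_{iv}^{2}, \] \[ \phi_{iv}^{2}=\{\mu(\boldsymbol{\gamma}^\top\boldsymbol{\gamma})-\exp(\mathbf{w}_{iv}^\top\boldsymbol{\beta}_{i})\}^{2},\quad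 \psi_{iv}^{2}=\mathbb{E}\{\boldsymbol{\gamma}^\top\mathbf{S}_{iv}\boldsymbol{\gamma}-\exp(\mathbf{w}_{iv}^\top\boldsymbol{\beta}_{i})\}^{2},\quad \delta_{iv}^{2}=\mathbb{E}\{\boldsymbol{\gamma}^\top\mathbf{S}_{iv}\boldsymbol{\gamma}-\mu(\boldsymbol{\gamma}^\top\boldsymbol{\gamma})\}^{2}. \] Moreover, for every $v\in\{1,\dots,V_i\}$ and $i\in\{1,\dots,n\}$, $\delta_{iv}^{2}=\phi_{iv}^{2}+\psi_{iv}^{2}$, and hence $\delta^{2}=\phi^{2}+\psi^{2}$.
   Context: Data: $\mathbf{y}_{ivt}\in\mathbb{R}^p$, $t=1,\dots,T_{iv}$, $v=1,\dots,V_i$, $i=1,\dots,n$, are multivariate normal with mean zero and covariance $\Sigma_{iv}$; $\mathbf{S}_{iv}$ is the sample covariance matrix of subject $i$ at visit $v$. Covariates $\mathbf{x}_{iv}\in\mathbb{R}^q$; model $\log(\boldsymbol{\gamma}^\top\Sigma_{iv}\boldsymbol{\gamma})=\beta_0+\mathbf{x}_{iv}^\top\boldsymbol{\beta}_1+u_i$ with $u_i\sim N(0,\sigma^2)$ and $\beta_{0i}=\beta_0+u_i$. Write $\mathbf{w}_{iv}=(1,\mathbf{x}_{iv}^\top)^\top$ and $\boldsymbol{\beta}_i=(\beta_{0i},\boldsymbol{\beta}_1^\top)^\top$, so $\beta_{0i}+\mathbf{x}_{iv}^\top\boldsymbol{\beta}_1=\mathbf{w}_{iv}^\top\boldsymbol{\beta}_i$.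 The vector $\boldsymbol{\gamma}\in\mathbb{R}^p$ and $\boldsymbol{\beta}_i$ are treated as given; the shrinkage parameters $\rho,\mu$ are common across all subjects and visits. $\mathbf{I}$ is the $p\times p$ identity matrix. *)

theory Defs
  imports "HOL-Probability.Probability"
begin

text \<open>Multivariate normal with mean zero and covariance matrix Sig, defined via
  the Cramer--Wold characterisation: Sig is a symmetric positive semidefinite
  matrix and every linear combination a'Y is univariate normal N(0, a'Sig a)
  (a point mass at 0 when the variance vanishes).\<close>
definition mvn0 :: "'a measure \<Rightarrow> ('a \<Rightarrow> real^'p) \<Rightarrow> real^'p^'p \<Rightarrow> bool" where
  "mvn0 M Y Sig \<longleftrightarrow>
     Y \<in> borel_measurable M \<and> transpose Sig = Sig \<and>
     (\<forall>a. 0 \<le> a \<bullet> (Sig *v a)) \<and>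
     (\<forall>a. (0 < a \<bullet> (Sig *v a) \<longrightarrow>
            distributed M lborel (\<lambda>\<omega>. a \<bullet> Y \<omega>)
              (\<lambda>x. ennreal (normal_density 0 (sqrt (a \<bullet> (Sig *v a))) x)))
        \<and> (a \<bullet> (Sig *v a) = 0 \<longrightarrow> (AE \<omega> in M. a \<bullet> Y \<omega> = 0)))"

definition outer :: "real^'p \<Rightarrow> real^'p^'p" where
  "outer y = (\<chi> j k. y $ j * y $ k)"

definition sample_cov :: "nat \<Rightarrow> (nat \<Rightarrow> real^'p) \<Rightarrow> real^'p^'p" where
  "sample_cov T Y = (1 / real T) *\<^sub>R (\<Sum>t = 1..T. outer (Y t))"

definition avg :: "nat \<Rightarrow> (nat \<Rightarrow> nat) \<Rightarrow> (nat \<Rightarrow> nat \<Rightarrow> real) \<Rightarrow> real" where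
  "avg n V f = (1 / real n) * (\<Sum>i = 1..n. (1 / real (V i)) * (\<Sum>v = 1..V i. f i v))"

end

theory Submission
  imports Defs
begin

text \<open>Let Q = gamma' S gamma for a sample covariance S: a mean of squares of
  N(0, gamma' Sigma gamma) variables, so E Q = e = exp(w' beta) by the model, and Var Q > 0.
  Because gamma' Sigma* gamma - e = (1 - rho)(Q - e) + rho (mu gamma'gamma - e) and the cross term
  has mean zero, each cell contributes (1 - rho)^2 psi_iv^2 + rho^2 (mu gamma'gamma - e)^2; the same
  splitting gives delta_iv^2 = phi_iv^2 + psi_iv^2. Averaging, the objective is
  (1 - rho)^2 psi^2 + rho^2 (phi^2 + (gamma'gamma)^2 (mu - mu0)^2), and completing the square in rho
  shows that it is minimised exactly at mu = mu0, rho = psi^2 / delta^2; uniqueness uses psi^2 > 0.\<close>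

lemma linear_quad_form: "linear (\<lambda>A::real^'n^'n. \<gamma> \<bullet> (A *v \<gamma>))"
  by (intro linearI)
    (simp_all add: matrix_vector_mult_add_rdistrib scaleR_matrix_vector_assoc[symmetric] inner_add_right)

lemma quad_form_shrinkage:
  "(\<gamma>::real^'n) \<bullet> ((a *\<^sub>R mat 1 + b *\<^sub>R A) *v \<gamma>) = a * (\<gamma> \<bullet> \<gamma>) + b * (\<gamma> \<bullet> (A *v \<gamma>))"
  by (simp add: linear_add[OF linear_quad_form] linear_scale[OF linear_quad_form, simplified])

lemma quad_form_outer: "(\<gamma>::real^'n) \<bullet> (outer y *v \<gamma>) = (\<gamma> \<bullet> y)\<^sup>2"
  unfolding outer_def power2_eq_square inner_vec_def matrix_vector_mult_def
  by (simp add: sum_distrib_left sum_distrib_right mult_ac)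

lemma quad_form_sample_cov:
  "(\<gamma>::real^'n) \<bullet> (sample_cov T Y *v \<gamma>) = (1 / real T) * (\<Sum>t = 1..T. (\<gamma> \<bullet> Y t)\<^sup>2)"
  by (simp add: sample_cov_def linear_scale[OF linear_quad_form, simplified]
      linear_sum[OF linear_quad_form] quad_form_outer)

lemma mvn0_inner_distributed:
  assumes "mvn0 M Y Sig" and "0 < a \<bullet> (Sig *v a)"
  shows "distributed M lborel (\<lambda>\<omega>. a \<bullet> Y \<omega>)
           (\<lambda>x. ennreal (normal_density 0 (sqrt (a \<bullet> (Sig *v a))) x))"
  using assms unfolding mvn0_def by blast

context prob_space
begin

lemma normal_distributed_integrable_power:
  assumes "0 < \<sigma>" and D: "distributed M lborel X (\<lambda>x. ennreal (normal_density 0 \<sigma> x))"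
  shows "integrable M (\<lambda>\<omega>. X \<omega> ^ k)"
  using integrable_normal_moment[OF \<open>0 < \<sigma>\<close>, of 0 k] distributed_integrable[OF D, of "\<lambda>x. x ^ k"]
  by simp

lemma normal_distributed_second_moment:
  assumes "0 < \<sigma>" and D: "distributed M lborel X (\<lambda>x. ennreal (normal_density 0 \<sigma> x))"
  shows "expectation (\<lambda>\<omega>. (X \<omega>)\<^sup>2) = \<sigma>\<^sup>2"
  using integral_normal_moment_even[of \<sigma> 0 1] distributed_integral[OF D, of "\<lambda>x. x\<^sup>2"] \<open>0 < \<sigma>\<close>
  by (simp add: power2_eq_square mult_ac)

lemma normal_distributed_not_AE_bounded:
  assumes "0 < \<sigma>" and D: "distributed M lborel X (\<lambda>x. ennreal (normal_density 0 \<sigma> x))"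
  shows "\<not> (AE \<omega> in M. X \<omega> \<le> c)"
proof
  assume "AE \<omega> in M. X \<omega> \<le> c"
  then have "AE x in distr M lborel X. x \<le> c"
    using distributed_measurable[OF D] by (subst AE_distr_iff) auto
  then have "AE x in density lborel (\<lambda>x. ennreal (normal_density 0 \<sigma> x)). x \<le> c"
    by (simp only: distributed_distr_eq_density[OF D])
  then have "AE x in lborel. x \<le> c"
    using normal_density_pos[OF \<open>0 < \<sigma>\<close>] by (subst (asm) AE_density) auto
  then have "emeasure lborel {c<..} = 0"
    by (subst (asm) AE_iff_measurable[where N="{c<..}"]) auto
  then show False
    using emeasure_mono[of "{c<..c+1}" "{c<..}" lborel] by fastforce
qed

lemma integrable_mean_of_normal_squares:
  assumes "0 < \<sigma>"
    and D: "\<And>t. t \<in> {1..T} \<Longrightarrow> distributed M lborel (X t) (\<lambda>x. ennreal (normal_density 0 \<sigma> x))"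
  defines "Z \<equiv> \<lambda>\<omega>. (1 / real T) * (\<Sum>t = 1..T. (X t \<omega>)\<^sup>2)"
  shows "integrable M Z" and "integrable M (\<lambda>\<omega>. (Z \<omega>)\<^sup>2)"
proof -
  note moments = normal_distributed_integrable_power[OF \<open>0 < \<sigma>\<close> D]
  have [measurable]: "X t \<in> borel_measurable M" if "t \<in> {1..T}" for t
    using distributed_measurable[OF D[OF that]] by simp
  show "integrable M Z"
    unfolding Z_def
    by (intro Bochner_Integration.integrable_mult_right Bochner_Integration.integrable_sum moments) auto
  show "integrable M (\<lambda>\<omega>. (Z \<omega>)\<^sup>2)"
  proof (rule Bochner_Integration.integrable_bound)
    show "integrable M (\<lambda>\<omega>. (1 / real T) * (\<Sum>t = 1..T. X t \<omega> ^ 4))"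
      by (intro Bochner_Integration.integrable_mult_right Bochner_Integration.integrable_sum moments)
        auto
    show "(\<lambda>\<omega>. (Z \<omega>)\<^sup>2) \<in> borel_measurable M"
      unfolding Z_def by measurable
    have "(Z \<omega>)\<^sup>2 \<le> (1 / real T) * (\<Sum>t = 1..T. X t \<omega> ^ 4)" for \<omega>
      using sum_squared_le_sum_of_squares[of "\<lambda>t. (X t \<omega>)\<^sup>2" "{1..T}"]
      by (auto simp: Z_def power2_eq_square power4_eq_xxxx divide_simps mult_ac)
    then show "AE \<omega> in M. norm ((Z \<omega>)\<^sup>2) \<le> norm ((1 / real T) * (\<Sum>t = 1..T. X t \<omega> ^ 4))"
      by (auto simp: sum_nonneg)
  qed
qed

lemma expectation_mean_of_normal_squares:
  assumes "1 \<le> T" and "0 < \<sigma>"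
    and D: "\<And>t. t \<in> {1..T} \<Longrightarrow> distributed M lborel (X t) (\<lambda>x. ennreal (normal_density 0 \<sigma> x))"
  shows "expectation (\<lambda>\<omega>. (1 / real T) * (\<Sum>t = 1..T. (X t \<omega>)\<^sup>2)) = \<sigma>\<^sup>2"
  using \<open>1 \<le> T\<close> normal_distributed_integrable_power[OF \<open>0 < \<sigma>\<close> D]
    normal_distributed_second_moment[OF \<open>0 < \<sigma>\<close> D]
  by (simp add: integral_sum)

text \<open>No independence over t is needed: X 1 squared is at most T Z, so a degenerate Z would make
  the Gaussian X 1 almost surely bounded.\<close>
lemma variance_mean_of_normal_squares_pos:
  assumes "1 \<le> T" and "0 < \<sigma>"
    and D: "\<And>t. t \<in> {1..T} \<Longrightarrow> distributed M lborel (X t) (\<lambda>x. ennreal (normal_density 0 \<sigma> x))"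
  defines "Z \<equiv> \<lambda>\<omega>. (1 / real T) * (\<Sum>t = 1..T. (X t \<omega>)\<^sup>2)"
  shows "0 < variance Z"
proof -
  have "integrable M Z" "integrable M (\<lambda>\<omega>. (Z \<omega>)\<^sup>2)"
    using integrable_mean_of_normal_squares[OF \<open>0 < \<sigma>\<close> D] unfolding Z_def by auto
  have "variance Z \<noteq> 0"
  proof
    assume "variance Z = 0"
    moreover have "integrable M (\<lambda>\<omega>. (Z \<omega> - expectation Z)\<^sup>2)"
      using \<open>integrable M Z\<close> \<open>integrable M (\<lambda>\<omega>. (Z \<omega>)\<^sup>2)\<close> by (simp add: power2_diff)
    ultimately have "AE \<omega> in M. Z \<omega> = \<sigma>\<^sup>2"
      using expectation_mean_of_normal_squares[OF assms(1-3)]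
      by (subst (asm) integral_nonneg_eq_0_iff_AE) (auto simp: Z_def)
    then have "AE \<omega> in M. X 1 \<omega> \<le> sqrt (real T * \<sigma>\<^sup>2)"
    proof eventually_elim
      case (elim \<omega>)
      have "(X 1 \<omega>)\<^sup>2 \<le> (\<Sum>t = 1..T. (X t \<omega>)\<^sup>2)"
        using \<open>1 \<le> T\<close> by (intro member_le_sum) auto
      also have "\<dots> = real T * \<sigma>\<^sup>2"
        using elim \<open>1 \<le> T\<close> by (simp add: Z_def field_simps)
      finally show ?case by (simp add: real_le_rsqrt)
    qed
    then show False
      using normal_distributed_not_AE_bounded[OF \<open>0 < \<sigma>\<close> D, of 1] \<open>1 \<le> T\<close> by simp
  qed
  then show ?thesis
    using variance_positive[of Z] by linarith
qed

lemma expectation_affine_square: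
  fixes Z :: "'a \<Rightarrow> real"
  assumes "integrable M Z" and "integrable M (\<lambda>\<omega>. (Z \<omega>)\<^sup>2)"
  shows "expectation (\<lambda>\<omega>. (a * Z \<omega> + b)\<^sup>2) = a\<^sup>2 * variance Z + (a * expectation Z + b)\<^sup>2"
  using assms by (simp add: variance_eq power2_sum prob_space algebra_simps)

lemma shrinkage_quad_form_risk:
  fixes A :: "'a \<Rightarrow> real^'n^'n" and \<gamma> :: "real^'n"
  defines "Q \<equiv> \<lambda>\<omega>. \<gamma> \<bullet> (A \<omega> *v \<gamma>)"
  assumes "integrable M Q" and "integrable M (\<lambda>\<omega>. (Q \<omega>)\<^sup>2)"
  shows "expectation (\<lambda>\<omega>. (\<gamma> \<bullet> (((\<rho> * \<mu>) *\<^sub>R mat 1 + (1 - \<rho>) *\<^sub>R A \<omega>) *v \<gamma>) - c)\<^sup>2)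
           = (1 - \<rho>)\<^sup>2 * variance Q + ((1 - \<rho>) * expectation Q + \<rho> * \<mu> * (\<gamma> \<bullet> \<gamma>) - c)\<^sup>2"
  using expectation_affine_square[OF assms(2,3), of "1 - \<rho>" "\<rho> * \<mu> * (\<gamma> \<bullet> \<gamma>) - c"]
  unfolding quad_form_shrinkage Q_def by (simp add: algebra_simps)

lemma quad_form_sample_cov_moments:
  assumes "1 \<le> T" and normal: "\<forall>t \<in> {1..T}. mvn0 M (Y t) Sig"
    and pos: "0 < \<gamma> \<bullet> (Sig *v \<gamma>)"
  defines "Z \<equiv> \<lambda>\<omega>. \<gamma> \<bullet> (sample_cov T (\<lambda>t. Y t \<omega>) *v \<gamma>)"
  shows "integrable M Z" and "integrable M (\<lambda>\<omega>. (Z \<omega>)\<^sup>2)"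
    and "expectation Z = \<gamma> \<bullet> (Sig *v \<gamma>)" and "0 < variance Z"
proof -
  let ?\<sigma> = "sqrt (\<gamma> \<bullet> (Sig *v \<gamma>))"
  have \<sigma>: "0 < ?\<sigma>" using pos by simp
  have D: "distributed M lborel (\<lambda>\<omega>. \<gamma> \<bullet> Y t \<omega>) (\<lambda>x. ennreal (normal_density 0 ?\<sigma> x))"
    if "t \<in> {1..T}" for t
    using mvn0_inner_distributed[OF bspec[OF normal that] pos] .
  have Z: "Z = (\<lambda>\<omega>. (1 / real T) * (\<Sum>t = 1..T. (\<gamma> \<bullet> Y t \<omega>)\<^sup>2))"
    by (simp add: Z_def quad_form_sample_cov)
  show "integrable M Z" and "integrable M (\<lambda>\<omega>. (Z \<omega>)\<^sup>2)"
    unfolding Z using integrable_mean_of_normal_squares[OF \<sigma> D] by auto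
  show "expectation Z = \<gamma> \<bullet> (Sig *v \<gamma>)"
    unfolding Z using expectation_mean_of_normal_squares[OF \<open>1 \<le> T\<close> \<sigma> D] pos by simp
  show "0 < variance Z"
    unfolding Z using variance_mean_of_normal_squares_pos[OF \<open>1 \<le> T\<close> \<sigma> D] by simp
qed

end

lemma avg_cong:
  "(\<And>i v. i \<in> {1..n} \<Longrightarrow> v \<in> {1..V i} \<Longrightarrow> f i v = h i v) \<Longrightarrow> avg n V f = avg n V h"
  unfolding avg_def by (intro arg_cong2[where f="(*)"] refl sum.cong) auto

lemma avg_add: "avg n V (\<lambda>i v. f i v + h i v) = avg n V f + avg n V h"
  unfolding avg_def by (simp add: sum.distrib distrib_left)

lemma avg_cmul: "avg n V (\<lambda>i v. c * f i v) = c * avg n V f"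
  unfolding avg_def by (simp add: sum_distrib_left mult_ac)

lemma avg_const:
  assumes "1 \<le> n" and "\<And>i. i \<in> {1..n} \<Longrightarrow> 1 \<le> V i"
  shows "avg n V (\<lambda>i v. c) = c"
proof -
  have "(\<Sum>i = 1..n. 1 / real (V i) * (\<Sum>v = 1..V i. c)) = (\<Sum>i = 1..n. c)"
    using assms(2) by (intro sum.cong) (auto simp: Suc_le_eq)
  then show ?thesis
    using assms(1) unfolding avg_def by simp
qed

lemma avg_nonneg:
  assumes "\<And>i v. i \<in> {1..n} \<Longrightarrow> v \<in> {1..V i} \<Longrightarrow> 0 \<le> f i v"
  shows "0 \<le> avg n V f"
  unfolding avg_def using assms by (intro mult_nonneg_nonneg sum_nonneg) auto

lemma avg_pos:
  assumes "1 \<le> n" and "\<And>i. i \<in> {1..n} \<Longrightarrow> 1 \<le> V i"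
    and "\<And>i v. i \<in> {1..n} \<Longrightarrow> v \<in> {1..V i} \<Longrightarrow> 0 < f i v"
  shows "0 < avg n V f"
  unfolding avg_def using assms
  by (intro mult_pos_pos sum_pos) (auto simp: Suc_le_eq intro!: sum_pos)

lemma avg_square_deviation:
  assumes "1 \<le> n" and "\<And>i. i \<in> {1..n} \<Longrightarrow> 1 \<le> V i"
  shows "avg n V (\<lambda>i v. (c - f i v)\<^sup>2)
           = avg n V (\<lambda>i v. (avg n V f - f i v)\<^sup>2) + (c - avg n V f)\<^sup>2"
proof -
  let ?m = "avg n V f"
  have "avg n V (\<lambda>i v. (c - f i v)\<^sup>2)
      = avg n V (\<lambda>i v. (?m - f i v)\<^sup>2 + (2 * (c - ?m) * ?m + (-2 * (c - ?m)) * f i v + (c - ?m)\<^sup>2))"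
    by (intro avg_cong) (simp add: power2_eq_square algebra_simps)
  also have "\<dots> = avg n V (\<lambda>i v. (?m - f i v)\<^sup>2) + (c - ?m)\<^sup>2"
    by (simp only: avg_add avg_cmul avg_const[OF assms])
  finally show ?thesis .
qed

lemma shrinkage_risk_complete_square:
  fixes \<psi> A \<rho> :: real
  assumes "\<psi> + A \<noteq> 0"
  shows "(1 - \<rho>)\<^sup>2 * \<psi> + \<rho>\<^sup>2 * A = \<psi> * A / (\<psi> + A) + ((\<psi> + A) * \<rho> - \<psi>)\<^sup>2 / (\<psi> + A)"
  using assms by (simp add: divide_simps) (simp add: power2_eq_square algebra_simps)

lemma shrinkage_risk_minimum:
  fixes \<psi> \<phi> g \<mu>\<^sub>0 :: real
  assumes "0 < \<psi>" and "0 \<le> \<phi>" and "0 < g"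
  defines "R \<equiv> \<lambda>\<mu> \<rho>. (1 - \<rho>)\<^sup>2 * \<psi> + \<rho>\<^sup>2 * (\<phi> + g * (\<mu> - \<mu>\<^sub>0)\<^sup>2)"
  shows "\<psi> * \<phi> / (\<phi> + \<psi>) \<le> R \<mu> \<rho>"
    and "R \<mu>\<^sub>0 (\<psi> / (\<phi> + \<psi>)) = \<psi> * \<phi> / (\<phi> + \<psi>)"
    and "R \<mu> \<rho> = \<psi> * \<phi> / (\<phi> + \<psi>) \<Longrightarrow> \<mu> = \<mu>\<^sub>0 \<and> \<rho> = \<psi> / (\<phi> + \<psi>)"
proof -
  define A where "A = \<phi> + g * (\<mu> - \<mu>\<^sub>0)\<^sup>2"
  have "\<phi> \<le> A" and A: "0 < \<psi> + A"
    using assms(1-3) by (auto simp: A_def add_pos_nonneg)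
  have R: "R \<mu> \<rho> = \<psi> * A / (\<psi> + A) + ((\<psi> + A) * \<rho> - \<psi>)\<^sup>2 / (\<psi> + A)"
    unfolding R_def A_def[symmetric] using A by (simp add: shrinkage_risk_complete_square)
  have gap: "\<psi> * A / (\<psi> + A) - \<psi> * \<phi> / (\<phi> + \<psi>) = \<psi>\<^sup>2 * (A - \<phi>) / ((\<psi> + A) * (\<phi> + \<psi>))"
    using A assms(1,2) by (simp add: divide_simps) (simp add: power2_eq_square algebra_simps)
  have gap_nonneg: "0 \<le> \<psi>\<^sup>2 * (A - \<phi>) / ((\<psi> + A) * (\<phi> + \<psi>))"
    using \<open>\<phi> \<le> A\<close> A assms(1,2) by simp
  have square_nonneg: "0 \<le> ((\<psi> + A) * \<rho> - \<psi>)\<^sup>2 / (\<psi> + A)"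
    using A by simp
  show "\<psi> * \<phi> / (\<phi> + \<psi>) \<le> R \<mu> \<rho>"
    using R gap gap_nonneg square_nonneg by linarith
  show "R \<mu>\<^sub>0 (\<psi> / (\<phi> + \<psi>)) = \<psi> * \<phi> / (\<phi> + \<psi>)"
    unfolding R_def using assms(1,2)
    by (simp add: divide_simps) (simp add: power2_eq_square algebra_simps)
  assume "R \<mu> \<rho> = \<psi> * \<phi> / (\<phi> + \<psi>)"
  then have "\<psi>\<^sup>2 * (A - \<phi>) / ((\<psi> + A) * (\<phi> + \<psi>)) = 0"
    and "((\<psi> + A) * \<rho> - \<psi>)\<^sup>2 / (\<psi> + A) = 0"
    using R gap gap_nonneg square_nonneg by linarith+
  then have "A = \<phi>" and "(\<psi> + A) * \<rho> = \<psi>"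
    using A assms(1,2) by auto
  then show "\<mu> = \<mu>\<^sub>0 \<and> \<rho> = \<psi> / (\<phi> + \<psi>)"
    using \<open>0 < g\<close> A by (simp add: A_def field_simps)
qed

theorem theorem1:
  fixes M :: "'m measure"
    and n :: nat and V :: "nat \<Rightarrow> nat" and T :: "nat \<Rightarrow> nat \<Rightarrow> nat"
    and y :: "nat \<Rightarrow> nat \<Rightarrow> nat \<Rightarrow> 'm \<Rightarrow> real^'p"
    and Sig :: "nat \<Rightarrow> nat \<Rightarrow> real^'p^'p"
    and x :: "nat \<Rightarrow> nat \<Rightarrow> real^'q"
    and \<gamma> :: "real^'p" and \<beta>0 :: "nat \<Rightarrow> real" and \<beta>1 :: "real^'q"
    and S :: "nat \<Rightarrow> nat \<Rightarrow> 'm \<Rightarrow> real^'p^'p"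
    and e :: "nat \<Rightarrow> nat \<Rightarrow> real"
    and obj :: "real \<Rightarrow> real \<Rightarrow> real"
    and Sstar :: "real \<Rightarrow> real \<Rightarrow> nat \<Rightarrow> nat \<Rightarrow> 'm \<Rightarrow> real^'p^'p"
    and \<mu>0 \<phi>2 \<psi>2 \<delta>2 :: real
    and \<phi>2iv \<psi>2iv \<delta>2iv :: "nat \<Rightarrow> nat \<Rightarrow> real"
  assumes M: "prob_space M"
    and n: "1 \<le> n"
    and V: "\<And>i. i \<in> {1..n} \<Longrightarrow> 1 \<le> V i"
    and T: "\<And>i v. i \<in> {1..n} \<Longrightarrow> v \<in> {1..V i} \<Longrightarrow> 1 \<le> T i v"
    and normal: "\<And>i v t. i \<in> {1..n} \<Longrightarrow> v \<in> {1..V i} \<Longrightarrow> t \<in> {1..T i v} \<Longrightarrow>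
                   mvn0 M (y i v t) (Sig i v)"
    and model: "\<And>i v. i \<in> {1..n} \<Longrightarrow> v \<in> {1..V i} \<Longrightarrow>
                   \<gamma> \<bullet> (Sig i v *v \<gamma>) = exp (\<beta>0 i + x i v \<bullet> \<beta>1)"
    and S_def: "\<And>i v \<omega>. S i v \<omega> = sample_cov (T i v) (\<lambda>t. y i v t \<omega>)"
    and e_def: "\<And>i v. e i v = exp (\<beta>0 i + x i v \<bullet> \<beta>1)"
    and Sstar_def: "\<And>\<mu> \<rho> i v \<omega>. Sstar \<mu> \<rho> i v \<omega> =
                      (\<rho> * \<mu>) *\<^sub>R mat 1 + (1 - \<rho>) *\<^sub>R S i v \<omega>"
    and obj_def: "\<And>\<mu> \<rho>. obj \<mu> \<rho> =
                   avg n V (\<lambda>i v. integral\<^sup>L M (\<lambda>\<omega>. (\<gamma> \<bullet> (Sstar \<mu> \<rho> i v \<omega> *v \<gamma>) - e i v)\<^sup>2))"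
    and mu0_def: "\<mu>0 = avg n V e / (\<gamma> \<bullet> \<gamma>)"
    and phi_iv_def: "\<And>i v. \<phi>2iv i v = (\<mu>0 * (\<gamma> \<bullet> \<gamma>) - e i v)\<^sup>2"
    and psi_iv_def: "\<And>i v. \<psi>2iv i v = integral\<^sup>L M (\<lambda>\<omega>. (\<gamma> \<bullet> (S i v \<omega> *v \<gamma>) - e i v)\<^sup>2)"
    and delta_iv_def: "\<And>i v. \<delta>2iv i v = integral\<^sup>L M (\<lambda>\<omega>. (\<gamma> \<bullet> (S i v \<omega> *v \<gamma>) - \<mu>0 * (\<gamma> \<bullet> \<gamma>))\<^sup>2)"
    and phi_def: "\<phi>2 = avg n V \<phi>2iv"
    and psi_def: "\<psi>2 = avg n V \<psi>2iv"
    and delta_def: "\<delta>2 = avg n V \<delta>2iv"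
  shows "(\<forall>\<mu> \<rho>. \<psi>2 * \<phi>2 / \<delta>2 \<le> obj \<mu> \<rho>)
       \<and> obj \<mu>0 (\<psi>2 / \<delta>2) = \<psi>2 * \<phi>2 / \<delta>2
       \<and> (\<forall>\<mu> \<rho>. obj \<mu> \<rho> = \<psi>2 * \<phi>2 / \<delta>2 \<longrightarrow> \<mu> = \<mu>0 \<and> \<rho> = \<psi>2 / \<delta>2)
       \<and> (\<forall>i\<in>{1..n}. \<forall>v\<in>{1..V i}. \<forall>\<omega>.
            Sstar \<mu>0 (\<psi>2 / \<delta>2) i v \<omega> =
              (\<psi>2 / \<delta>2 * \<mu>0) *\<^sub>R mat 1 + (\<phi>2 / \<delta>2) *\<^sub>R S i v \<omega>)
       \<and> (\<forall>i\<in>{1..n}. \<forall>v\<in>{1..V i}. \<delta>2iv i v = \<phi>2iv i v + \<psi>2iv i v)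
       \<and> \<delta>2 = \<phi>2 + \<psi>2"
proof -
  interpret prob_space M by (rule M)
  define g where "g = \<gamma> \<bullet> \<gamma>"
  define Q where "Q i v = (\<lambda>\<omega>. \<gamma> \<bullet> (S i v \<omega> *v \<gamma>))" for i v
  have cell: "integrable M (Q i v)" "integrable M (\<lambda>\<omega>. (Q i v \<omega>)\<^sup>2)"
      "expectation (Q i v) = e i v" "\<psi>2iv i v = variance (Q i v)" "0 < \<psi>2iv i v"
    if iv: "i \<in> {1..n}" "v \<in> {1..V i}" for i v
  proof -
    have pos: "0 < \<gamma> \<bullet> (Sig i v *v \<gamma>)" and Sig: "\<gamma> \<bullet> (Sig i v *v \<gamma>) = e i v"
      using model[OF iv] e_def by simp_all
    have "\<forall>t \<in> {1..T i v}. mvn0 M (y i v t) (Sig i v)"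
      using normal[OF iv] by blast
    from quad_form_sample_cov_moments[OF T[OF iv] this pos]
    show "integrable M (Q i v)" "integrable M (\<lambda>\<omega>. (Q i v \<omega>)\<^sup>2)" "expectation (Q i v) = e i v"
      "\<psi>2iv i v = variance (Q i v)" "0 < \<psi>2iv i v"
      by (simp_all add: Q_def S_def Sig psi_iv_def)
  qed
  have risk_cell: "integral\<^sup>L M (\<lambda>\<omega>. (\<gamma> \<bullet> (Sstar \<mu> \<rho> i v \<omega> *v \<gamma>) - e i v)\<^sup>2)
      = (1 - \<rho>)\<^sup>2 * \<psi>2iv i v + \<rho>\<^sup>2 * (\<mu> * g - e i v)\<^sup>2"
    if iv: "i \<in> {1..n}" "v \<in> {1..V i}" for i v \<mu> \<rho>
    using shrinkage_quad_form_risk[OF cell(1,2)[OF iv, unfolded Q_def], of \<rho> \<mu> "e i v"]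
      cell(3,4)[OF iv]
    unfolding Sstar_def by (simp add: Q_def g_def power2_eq_square algebra_simps)
  have delta_cell: "\<delta>2iv i v = \<phi>2iv i v + \<psi>2iv i v" if iv: "i \<in> {1..n}" "v \<in> {1..V i}" for i v
    using shrinkage_quad_form_risk[OF cell(1,2)[OF iv, unfolded Q_def], of 0 _ "\<mu>0 * g"]
      cell(3,4)[OF iv]
    by (simp add: delta_iv_def phi_iv_def Q_def g_def power2_commute)
  have "0 < g"
    using model[of 1 1] e_def[of 1 1] n V[of 1] by (auto simp: g_def)
  then have mu0_g: "\<mu>0 * g = avg n V e"
    by (simp add: mu0_def g_def)
  have phi: "\<phi>2 = avg n V (\<lambda>i v. (avg n V e - e i v)\<^sup>2)"
    unfolding phi_def by (intro avg_cong) (simp add: phi_iv_def mu0_g[symmetric] g_def)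
  have obj: "obj \<mu> \<rho> = (1 - \<rho>)\<^sup>2 * \<psi>2 + \<rho>\<^sup>2 * (\<phi>2 + g\<^sup>2 * (\<mu> - \<mu>0)\<^sup>2)" for \<mu> \<rho>
  proof -
    have "obj \<mu> \<rho> = (1 - \<rho>)\<^sup>2 * \<psi>2 + \<rho>\<^sup>2 * avg n V (\<lambda>i v. (\<mu> * g - e i v)\<^sup>2)"
      unfolding obj_def psi_def avg_add[symmetric] avg_cmul[symmetric] by (intro avg_cong risk_cell)
    also have "avg n V (\<lambda>i v. (\<mu> * g - e i v)\<^sup>2) = \<phi>2 + (\<mu> * g - \<mu>0 * g)\<^sup>2"
      using avg_square_deviation[where V=V and c="\<mu> * g" and f=e, OF n V] by (simp add: phi mu0_g)
    finally show ?thesis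
      by (simp add: power2_eq_square algebra_simps)
  qed
  have "0 < \<psi>2" and "0 \<le> \<phi>2"
    using n V cell(5) by (auto simp: psi_def phi_def phi_iv_def intro!: avg_pos avg_nonneg)
  moreover have \<delta>: "\<delta>2 = \<phi>2 + \<psi>2"
    unfolding delta_def phi_def psi_def avg_add[symmetric] by (intro avg_cong delta_cell)
  moreover from calculation have "1 - \<psi>2 / \<delta>2 = \<phi>2 / \<delta>2"
    by (simp add: field_simps)
  ultimately show ?thesis
    using shrinkage_risk_minimum[where \<psi>=\<psi>2 and \<phi>=\<phi>2 and g="g\<^sup>2" and \<mu>\<^sub>0=\<mu>0] \<open>0 < g\<close> delta_cell
    by (auto simp: obj Sstar_def)
qed

end
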